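(* Let $P(y,dz)=\mathbb P(y+\zeta\in dz)$ be the transition kernel of a random walk $\{S_n\}$ on $\mathbb R$ with i.i.d. increments distributed as $\zeta$, let $s\in\mathbb R$, $\tau=\inf\{n\ge0:S_n>s\}$, let $v:\mathbb R\to(0,\infty)$ be measurable and $w(y)=\int v(z)P(y,dz)$, and let $\epsilon>0$. For a starting point $S_0=y\le s$ define $L=\mathbb 1_{\{\tau<\infty\}}\prod_{k=1}^\tau w(S_{k-1})/v(S_k)$. Assume $w(y)\in(0,\infty)$ for $y\le s$, and that there exist $\delta_1>0$ and a function $h:\mathbb R\to[\delta_1,\infty)$ with $$w(y)^{1+\epsilon}\int v(z)h(z)P(y,dz)\le h(y)v(y)^{2+\epsilon}\quad\text{for all }y\le s.$$ If moreover $h(z)\ge1$ and $v(z)\ge\delta_2$ for all $z>s$, for some $\delta_2>0$, then for every $y\le s$, $$\mathbb E_y[L^{1+\epsilon}]\le\delta_1^{-1}\delta_2^{-(2+\epsilon)}v(y)^{2+\epsilon}h(y),$$ where $\mathbb E_y$ denotes expectation under the original law of the random walk started at $y$. *)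

theory Defs
  imports "HOL-Probability.Probability"
begin

text \<open>A sample path is a sequence of increments
  \<open>\<omega> :: nat \<Rightarrow> real\<close>, distributed according to the infinite product
  \<open>PiM UNIV (\<lambda>_. Z)\<close>; the walk started at \<open>y\<close> is \<open>S_n = y + \<omega> 0 + ... + \<omega> (n-1)\<close>.\<close>

definition rw :: "real \<Rightarrow> (nat \<Rightarrow> real) \<Rightarrow> nat \<Rightarrow> real" where
  "rw y \<omega> n = y + (\<Sum>i<n. \<omega> i)"

definition path_measure :: "real measure \<Rightarrow> (nat \<Rightarrow> real) measure" where
  "path_measure Z = PiM UNIV (\<lambda>_::nat. Z)"

text \<open>Kernel integral \<open>\<integral> f(z) P(y,dz) = \<integral> f(y+x) Z(dx)\<close> (value in [0,\<infinity>]).\<close>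
definition kern_int :: "real measure \<Rightarrow> (real \<Rightarrow> real) \<Rightarrow> real \<Rightarrow> ennreal" where
  "kern_int Z f y = (\<integral>\<^sup>+ x. ennreal (f (y + x)) \<partial>Z)"

text \<open>\<open>w(y) = \<integral> v(z) P(y,dz)\<close>, used only where it is finite (y \<le> s).\<close>
definition wfun :: "real measure \<Rightarrow> (real \<Rightarrow> real) \<Rightarrow> real \<Rightarrow> real" where
  "wfun Z v y = enn2real (kern_int Z v y)"

text \<open>First passage time \<open>\<tau> = inf{n \<ge> 0. S_n > s}\<close>; meaningful when finite.\<close>
definition hit_time :: "real \<Rightarrow> real \<Rightarrow> (nat \<Rightarrow> real) \<Rightarrow> nat" where
  "hit_time s y \<omega> = (LEAST n. rw y \<omega> n > s)"

definition lr :: "real measure \<Rightarrow> (real \<Rightarrow> real) \<Rightarrow> real \<Rightarrow> real \<Rightarrow> (nat \<Rightarrow> real) \<Rightarrow> real" where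
  "lr Z v s y \<omega> =
     (if \<exists>n. rw y \<omega> n > s
      then (\<Prod>k\<in>{1..hit_time s y \<omega>}. wfun Z v (rw y \<omega> (k - 1)) / v (rw y \<omega> k))
      else 0)"

end

theory Submission
  imports Defs
begin

text \<open>With \<open>V(z) = v(z) powr (2 + \<epsilon>) * h(z)\<close> and \<open>g(y, x) = (w(y) / v(y + x)) powr (1 + \<epsilon>)\<close>,
  on \<open>{\<tau> < \<infinity>}\<close> the quantity \<open>L powr (1 + \<epsilon>)\<close> is the product of \<open>g(S\<^sub>k, S\<^sub>k\<^sub>+\<^sub>1 - S\<^sub>k)\<close>
  over \<open>k < \<tau>\<close>.  The Lyapunov condition says that \<open>V\<close> is superharmonic on \<open>(-\<infinity>, s]\<close> for
  the kernel weighted by \<open>g\<close>, so the product of the weights up to \<open>\<tau>\<close> times \<open>V(S\<^sub>\<tau>)\<close>,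
  restricted to \<open>{\<tau> \<le> n}\<close>, has expectation at most \<open>V(y)\<close> for every \<open>n\<close>; monotone
  convergence lets \<open>n \<rightarrow> \<infinity>\<close>.  Since \<open>S\<^sub>\<tau> > s\<close>, \<open>V(S\<^sub>\<tau>) \<ge> \<delta>2 powr (2 + \<epsilon>) * \<delta>1\<close>, which
  yields the bound on \<open>L powr (1 + \<epsilon>)\<close>.\<close>

lemma rw_Suc: "rw y \<omega> (Suc n) = rw y \<omega> n + \<omega> n"
  by (simp add: rw_def)

lemma rw_shift: "rw (y + \<omega> 0) (\<lambda>i. \<omega> (Suc i)) n = rw y \<omega> (Suc n)"
  unfolding rw_def by (simp only: sum.lessThan_Suc_shift add.assoc)

fun stopped_weight ::
  "(real \<Rightarrow> real \<Rightarrow> ennreal) \<Rightarrow> (real \<Rightarrow> ennreal) \<Rightarrow> real \<Rightarrow> nat \<Rightarrow> real \<Rightarrow> (nat \<Rightarrow> real) \<Rightarrow> ennreal"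
where
  "stopped_weight g V s 0 y \<omega> = (if s < y then V y else 0)"
| "stopped_weight g V s (Suc n) y \<omega> =
     (if s < y then V y else g y (\<omega> 0) * stopped_weight g V s n (y + \<omega> 0) (\<lambda>i. \<omega> (Suc i)))"

lemma stopped_weight_mono: "stopped_weight g V s n y \<omega> \<le> stopped_weight g V s (Suc n) y \<omega>"
proof (induction n arbitrary: y \<omega>)
  case (Suc n)
  show ?case
    using Suc[of "y + \<omega> 0" "\<lambda>i. \<omega> (Suc i)"]
    by (auto intro: mult_left_mono simp del: stopped_weight.simps(2)
        simp: stopped_weight.simps(2)[of _ _ _ "Suc n"] stopped_weight.simps(2)[of _ _ _ n])
qed simp

lemma stopped_weight_at_hit:
  assumes "s < rw y \<omega> n" and "\<forall>m<n. rw y \<omega> m \<le> s"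
  shows "stopped_weight g V s n y \<omega> = (\<Prod>k<n. g (rw y \<omega> k) (\<omega> k)) * V (rw y \<omega> n)"
  using assms
proof (induction n arbitrary: y \<omega>)
  case 0
  then show ?case by (simp add: rw_def)
next
  case (Suc n)
  have "\<not> s < y"
    using Suc.prems(2) by (auto simp: rw_def)
  moreover have "stopped_weight g V s n (y + \<omega> 0) (\<lambda>i. \<omega> (Suc i))
      = (\<Prod>k<n. g (rw y \<omega> (Suc k)) (\<omega> (Suc k))) * V (rw y \<omega> (Suc n))"
    using Suc.prems by (intro Suc.IH[of "y + \<omega> 0" "\<lambda>i. \<omega> (Suc i)", unfolded rw_shift]) auto
  ultimately show ?case
    unfolding prod.lessThan_Suc_shift by (simp add: mult.assoc rw_def)
qed

lemma measurable_stopped_weight: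
  assumes Z_sets: "sets Z = sets borel"
    and [measurable]: "(\<lambda>(y, x). g y x) \<in> borel_measurable (borel \<Otimes>\<^sub>M borel)"
      "V \<in> borel_measurable borel"
  shows "(\<lambda>(y, \<omega>). stopped_weight g V s n y \<omega>) \<in> borel_measurable (borel \<Otimes>\<^sub>M PiM UNIV (\<lambda>_::nat. Z))"
proof (induction n)
  case 0
  show ?case by (simp add: case_prod_beta') measurable
next
  case (Suc n)
  let ?S = "PiM UNIV (\<lambda>_::nat. Z)"
  have [measurable]: "(\<lambda>\<omega>. \<omega> 0) \<in> borel_measurable ?S"
    by (metis measurable_cong_sets[OF refl Z_sets] measurable_component_singleton UNIV_I)
  have [measurable]: "(\<lambda>\<omega> i. \<omega> (Suc i)) \<in> measurable ?S ?S"
    by (rule measurable_PiM_single') (auto simp: space_PiM PiE_iff)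
  have "(\<lambda>(y, \<omega>). (y + \<omega> 0, \<lambda>i. \<omega> (Suc i))) \<in> measurable (borel \<Otimes>\<^sub>M ?S) (borel \<Otimes>\<^sub>M ?S)"
    by measurable
  from measurable_compose[OF this Suc]
  have "(\<lambda>p. stopped_weight g V s n (fst p + snd p 0) (\<lambda>i. snd p (Suc i))) \<in> borel_measurable (borel \<Otimes>\<^sub>M ?S)"
    by (simp add: case_prod_beta')
  then show ?case by (simp add: case_prod_beta') measurable
qed

corollary measurable_stopped_weight_path:
  assumes "sets Z = sets borel"
    and "(\<lambda>(y, x). g y x) \<in> borel_measurable (borel \<Otimes>\<^sub>M borel)" "V \<in> borel_measurable borel"
  shows "(\<lambda>\<omega>. stopped_weight g V s n y \<omega>) \<in> borel_measurable (PiM UNIV (\<lambda>_::nat. Z))"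
  using measurable_Pair2[OF measurable_stopped_weight[OF assms], where x=y] by simp

lemma (in prob_space) nn_integral_PiM_case_nat:
  assumes [measurable]: "f \<in> borel_measurable (PiM UNIV (\<lambda>_::nat. M))"
  shows "(\<integral>\<^sup>+\<omega>. f \<omega> \<partial>PiM UNIV (\<lambda>_::nat. M))
           = (\<integral>\<^sup>+x. \<integral>\<^sup>+\<omega>. f (case_nat x \<omega>) \<partial>PiM UNIV (\<lambda>_::nat. M) \<partial>M)"
proof -
  interpret S: sequence_space M ..
  interpret P: pair_sigma_finite M "\<Pi>\<^sub>M i::nat\<in>UNIV. M" ..
  have "(\<integral>\<^sup>+\<omega>. f \<omega> \<partial>S.S) = (\<integral>\<^sup>+p. f ((\<lambda>(x, \<omega>). case_nat x \<omega>) p) \<partial>(M \<Otimes>\<^sub>M S.S))"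
    by (subst S.PiM_iter[symmetric]) (simp add: nn_integral_distr)
  then show ?thesis
    by (simp add: S.nn_integral_fst[symmetric])
qed

lemma nn_integral_stopped_weight_le:
  assumes Z: "prob_space Z" and Z_sets: "sets Z = sets borel"
    and [measurable]: "(\<lambda>(y, x). g y x) \<in> borel_measurable (borel \<Otimes>\<^sub>M borel)"
      "V \<in> borel_measurable borel"
    and superharmonic: "\<And>y. y \<le> s \<Longrightarrow> (\<integral>\<^sup>+x. g y x * V (y + x) \<partial>Z) \<le> V y"
  shows "(\<integral>\<^sup>+\<omega>. stopped_weight g V s n y \<omega> \<partial>PiM UNIV (\<lambda>_::nat. Z)) \<le> V y"
proof (induction n arbitrary: y)
  interpret prob_space Z by fact
  let ?S = "PiM UNIV (\<lambda>_::nat. Z)"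
  have S: "prob_space ?S"
    by (rule prob_space_PiM) (rule Z)
  have W_meas: "(\<lambda>\<omega>. stopped_weight g V s n y \<omega>) \<in> borel_measurable ?S" for n y
    using Z_sets by (rule measurable_stopped_weight_path) measurable
  {
    case 0
    show ?case by (simp add: prob_space.emeasure_space_1[OF S])
  next
    case (Suc n)
    show ?case
    proof (cases "s < y")
      case False
      have "(\<integral>\<^sup>+\<omega>. stopped_weight g V s (Suc n) y \<omega> \<partial>?S)
          = (\<integral>\<^sup>+x. \<integral>\<^sup>+\<omega>. g y x * stopped_weight g V s n (y + x) \<omega> \<partial>?S \<partial>Z)"
        by (subst nn_integral_PiM_case_nat[OF W_meas]) (simp add: False)
      also have "\<dots> = (\<integral>\<^sup>+x. g y x * \<integral>\<^sup>+\<omega>. stopped_weight g V s n (y + x) \<omega> \<partial>?S \<partial>Z)"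
        by (intro nn_integral_cong nn_integral_cmult W_meas)
      also have "\<dots> \<le> (\<integral>\<^sup>+x. g y x * V (y + x) \<partial>Z)"
        by (intro nn_integral_mono mult_left_mono Suc) simp
      also have "\<dots> \<le> V y"
        using False by (intro superharmonic) simp
      finally show ?thesis .
    qed (simp add: prob_space.emeasure_space_1[OF S])
  }
qed

lemma nn_integral_Sup_stopped_weight_le:
  assumes Z: "prob_space Z" and Z_sets: "sets Z = sets borel"
    and g_meas: "(\<lambda>(y, x). g y x) \<in> borel_measurable (borel \<Otimes>\<^sub>M borel)"
    and V_meas: "V \<in> borel_measurable borel"
    and superharmonic: "\<And>y. y \<le> s \<Longrightarrow> (\<integral>\<^sup>+x. g y x * V (y + x) \<partial>Z) \<le> V y"
  shows "(\<integral>\<^sup>+\<omega>. (SUP n. stopped_weight g V s n y \<omega>) \<partial>PiM UNIV (\<lambda>_::nat. Z)) \<le> V y"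
proof -
  have "incseq (\<lambda>n \<omega>. stopped_weight g V s n y \<omega>)"
    by (intro incseq_SucI le_funI stopped_weight_mono)
  moreover have "(\<lambda>\<omega>. stopped_weight g V s n y \<omega>) \<in> borel_measurable (PiM UNIV (\<lambda>_::nat. Z))" for n
    by (rule measurable_stopped_weight_path[OF Z_sets g_meas V_meas])
  ultimately show ?thesis
    by (simp add: nn_integral_monotone_convergence_SUP SUP_least
        nn_integral_stopped_weight_le[OF Z Z_sets g_meas V_meas superharmonic])
qed

lemma measurable_wfun:
  assumes "prob_space Z" "sets Z = sets borel" and [measurable]: "v \<in> borel_measurable borel"
  shows "wfun Z v \<in> borel_measurable borel"
proof -
  interpret prob_space Z by fact
  have [measurable]: "(\<lambda>(y, x). ennreal (v (y + x))) \<in> borel_measurable (borel \<Otimes>\<^sub>M Z)"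
    by (subst measurable_cong_sets[OF sets_pair_measure_cong[OF refl assms(2)] refl]) measurable
  show ?thesis
    unfolding wfun_def kern_int_def by measurable
qed

lemma ennreal_lr_powr:
  assumes v_pos: "\<forall>z. v z > 0" and hit: "\<exists>n. s < rw y \<omega> n"
  shows "ennreal (lr Z v s y \<omega> powr p)
           = (\<Prod>k<hit_time s y \<omega>. ennreal ((wfun Z v (rw y \<omega> k) / v (rw y \<omega> k + \<omega> k)) powr p))"
proof -
  have "lr Z v s y \<omega> = (\<Prod>k<hit_time s y \<omega>. wfun Z v (rw y \<omega> k) / v (rw y \<omega> k + \<omega> k))"
    using hit by (simp add: lr_def prod.atLeast1_atMost_eq rw_Suc)
  then show ?thesis
    using v_pos by (simp add: prod_powr_distrib prod_ennreal wfun_def less_imp_le)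
qed

lemma lr_powr_le_Sup_stopped_weight:
  assumes v_pos: "\<forall>z. v z > 0" and V_above: "\<forall>z>s. 1 \<le> ennreal c * V z"
  shows "ennreal (lr Z v s y \<omega> powr p)
           \<le> ennreal c * (SUP n. stopped_weight (\<lambda>y x. ennreal ((wfun Z v y / v (y + x)) powr p)) V s n y \<omega>)"
    (is "_ \<le> ennreal c * (SUP n. stopped_weight ?g V s n y \<omega>)")
proof (cases "\<exists>n. s < rw y \<omega> n")
  case True
  define N where "N = hit_time s y \<omega>"
  have hit: "s < rw y \<omega> N"
    unfolding N_def hit_time_def using True by (rule LeastI_ex)
  have before: "\<forall>m<N. rw y \<omega> m \<le> s"
    unfolding N_def hit_time_def by (auto dest: not_less_Least)
  have "ennreal (lr Z v s y \<omega> powr p) = (\<Prod>k<N. ?g (rw y \<omega> k) (\<omega> k))"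
    unfolding N_def using v_pos True by (rule ennreal_lr_powr)
  also have "\<dots> \<le> (\<Prod>k<N. ?g (rw y \<omega> k) (\<omega> k)) * (ennreal c * V (rw y \<omega> N))"
    using mult_left_mono[of 1 "ennreal c * V (rw y \<omega> N)"] V_above hit by simp
  also have "\<dots> = ennreal c * stopped_weight ?g V s N y \<omega>"
    by (simp add: stopped_weight_at_hit[OF hit before] ac_simps)
  also have "\<dots> \<le> ennreal c * (SUP n. stopped_weight ?g V s n y \<omega>)"
    by (intro mult_left_mono SUP_upper) simp_all
  finally show ?thesis .
qed (simp add: lr_def)

lemma lyapunov_superharmonic:
  assumes Z_sets: "sets Z = sets borel"
    and v_meas: "v \<in> borel_measurable borel" and h_meas: "h \<in> borel_measurable borel"
    and v_pos: "\<forall>z. v z > 0" and h_nonneg: "\<forall>z. h z \<ge> 0"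
    and lyap: "ennreal (wfun Z v y powr (1 + e)) * kern_int Z (\<lambda>z. v z * h z) y
                 \<le> ennreal (h y * v y powr (2 + e))"
  shows "(\<integral>\<^sup>+x. ennreal ((wfun Z v y / v (y + x)) powr (1 + e))
                  * ennreal (v (y + x) powr (2 + e) * h (y + x)) \<partial>Z)
           \<le> ennreal (v y powr (2 + e) * h y)"
proof -
  have w_nonneg: "wfun Z v y \<ge> 0"
    by (simp add: wfun_def)
  have powr_cancel: "(wfun Z v y / v z) powr (1 + e) * (v z powr (2 + e) * h z)
                       = wfun Z v y powr (1 + e) * (v z * h z)" for z
  proof -
    have "v z powr (2 + e) = v z powr (1 + e) * v z"
      using powr_add[of "v z" "1 + e" 1] v_pos[rule_format, of z] by simp
    then show ?thesis
      using w_nonneg v_pos[rule_format, of z] by (simp add: powr_divide field_simps)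
  qed
  have "(\<integral>\<^sup>+x. ennreal ((wfun Z v y / v (y + x)) powr (1 + e))
                  * ennreal (v (y + x) powr (2 + e) * h (y + x)) \<partial>Z)
           = (\<integral>\<^sup>+x. ennreal (wfun Z v y powr (1 + e)) * ennreal (v (y + x) * h (y + x)) \<partial>Z)"
    using v_pos h_nonneg by (intro nn_integral_cong)
       (simp add: ennreal_mult'[symmetric] powr_cancel less_imp_le)
  also have "\<dots> = ennreal (wfun Z v y powr (1 + e)) * kern_int Z (\<lambda>z. v z * h z) y"
    unfolding kern_int_def
    by (rule nn_integral_cmult, subst measurable_cong_sets[OF Z_sets refl]) (use v_meas h_meas in measurable)
  also have "\<dots> \<le> ennreal (h y * v y powr (2 + e))"
    by (fact lyap)
  finally show ?thesis
    by (simp add: mult.commute)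
qed

lemma one_le_inverse_mult_powr:
  fixes d1 d2 a x k :: real
  assumes "0 < d1" "0 < d2" "0 \<le> a" "d2 \<le> x" "d1 \<le> k"
  shows "1 \<le> inverse d1 * d2 powr (-a) * (x powr a * k)"
proof -
  have "1 = inverse d1 * d2 powr (-a) * (d2 powr a * d1)"
    unfolding powr_minus using assms(1,2) by (simp add: field_simps)
  also have "\<dots> \<le> inverse d1 * d2 powr (-a) * (x powr a * k)"
    using assms by (intro mult_left_mono mult_mono powr_mono2) auto
  finally show ?thesis .
qed

theorem proposition2:
  fixes Z :: "real measure" and v h :: "real \<Rightarrow> real"
    and s \<epsilon> \<delta>1 \<delta>2 y :: real
  assumes Z_prob: "prob_space Z" and Z_sets: "sets Z = sets borel"
    and v_meas: "v \<in> borel_measurable borel" and v_pos: "\<forall>z. v z > 0"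
    and eps: "\<epsilon> > 0"
    and w_fin: "\<forall>x\<le>s. 0 < kern_int Z v x \<and> kern_int Z v x < \<infinity>"
    and d1: "\<delta>1 > 0" and h_lb: "\<forall>z. h z \<ge> \<delta>1"
    and h_meas: "h \<in> borel_measurable borel"
    and lyap: "\<forall>x\<le>s. ennreal (wfun Z v x powr (1 + \<epsilon>)) * kern_int Z (\<lambda>z. v z * h z) x
                      \<le> ennreal (h x * v x powr (2 + \<epsilon>))"
    and h_above: "\<forall>z>s. h z \<ge> 1"
    and d2: "\<delta>2 > 0" and v_above: "\<forall>z>s. v z \<ge> \<delta>2"
    and y: "y \<le> s"
  shows "(\<integral>\<^sup>+ \<omega>. ennreal (lr Z v s y \<omega> powr (1 + \<epsilon>)) \<partial>path_measure Z)
           \<le> ennreal (inverse \<delta>1 * \<delta>2 powr (-(2 + \<epsilon>)) * v y powr (2 + \<epsilon>) * h y)"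
proof -
  define g where "g y x = ennreal ((wfun Z v y / v (y + x)) powr (1 + \<epsilon>))" for y x
  define V where "V z = ennreal (v z powr (2 + \<epsilon>) * h z)" for z
  define c where "c = inverse \<delta>1 * \<delta>2 powr (-(2 + \<epsilon>))"
  have h_nonneg: "\<forall>z. h z \<ge> 0"
    using h_lb d1 by (meson less_imp_le order_trans)
  have g_meas: "(\<lambda>(y, x). g y x) \<in> borel_measurable (borel \<Otimes>\<^sub>M borel)"
    using measurable_wfun[OF Z_prob Z_sets v_meas] v_meas unfolding g_def by measurable
  have V_meas: "V \<in> borel_measurable borel"
    using v_meas h_meas unfolding V_def by measurable
  have superharmonic: "(\<integral>\<^sup>+z. g x z * V (x + z) \<partial>Z) \<le> V x" if "x \<le> s" for x
    unfolding g_def V_def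
    using lyap that by (intro lyapunov_superharmonic[OF Z_sets v_meas h_meas v_pos h_nonneg]) simp
  have V_above: "\<forall>z>s. 1 \<le> ennreal c * V z"
    using d1 d2 eps v_above h_lb h_nonneg one_le_inverse_mult_powr[of \<delta>1 \<delta>2 "2 + \<epsilon>"]
    by (simp add: V_def c_def ennreal_mult[symmetric])
  have "(\<integral>\<^sup>+ \<omega>. ennreal (lr Z v s y \<omega> powr (1 + \<epsilon>)) \<partial>path_measure Z)
      \<le> (\<integral>\<^sup>+ \<omega>. ennreal c * (SUP n. stopped_weight g V s n y \<omega>) \<partial>PiM UNIV (\<lambda>_. Z))"
    unfolding path_measure_def g_def
    using lr_powr_le_Sup_stopped_weight[OF v_pos V_above] by (intro nn_integral_mono) simp
  also have "\<dots> = ennreal c * (\<integral>\<^sup>+ \<omega>. (SUP n. stopped_weight g V s n y \<omega>) \<partial>PiM UNIV (\<lambda>_. Z))"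
    by (intro nn_integral_cmult borel_measurable_SUP measurable_stopped_weight_path[OF Z_sets g_meas V_meas])
      simp
  also have "\<dots> \<le> ennreal c * V y"
    using nn_integral_Sup_stopped_weight_le[OF Z_prob Z_sets g_meas V_meas superharmonic]
    by (rule mult_left_mono) auto
  finally show ?thesis
    using d1 h_nonneg by (simp add: V_def c_def ennreal_mult[symmetric] mult.assoc)
qed

end
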